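(* Let $0<\gamma<\delta<1$ and set $\beta=\sqrt{1-\delta^2}$. Then there exists a constant $C>0$, depending only on $\gamma$ and $\delta$, such that for every positive real number $m$, \[J_m(\gamma m)<C\left(\frac{\gamma}{\delta}\right)^{\beta m}J_m(\delta m).\]
   Context: $J_m$ denotes the Bessel function of the first kind of order $m$, i.e. the solution of $x^2J_m''(x)+xJ_m'(x)+(x^2-m^2)J_m(x)=0$ that is bounded at the origin, normalized by $\lim_{x\to0}x^{-m}J_m(x)=2^{-m}\Gamma(m+1)^{-1}$. *)

theory Defs
  imports "HOL-Analysis.Analysis"
begin

text \<open>Bessel function of the first kind of real order m, via its standard power series
  J_m(x) = sum_k (-1)^k / (k! Gamma(m+k+1)) (x/2)^(2k+m), used for x > 0.
  This series is the unique solution of Bessel's equation bounded at the origin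
  with the normalisation x^(-m) J_m(x) -> 2^(-m)/Gamma(m+1).\<close>
definition besselJ :: "real \<Rightarrow> real \<Rightarrow> real" where
  "besselJ m x = (\<Sum>k. (-1)^k / (fact k * Gamma (m + real k + 1)) * (x / 2) powr (2 * real k + m))"

end

theory Submission
  imports Defs
begin

text \<open>
  Write J_m(x) = (x/2)^m F(y) with y = (x/2)^2, where F(y) = sum_n (-1)^n y^n / (n! Gamma(m+n+1))
  is entire and solves (y F')' + m F' + F = 0. Let r(y) be the smaller root of r^2 - m r + y = 0,
  so r increases from r(0) = 0 to m/2 at y = m^2/4. The combination P = r F + y F' satisfies
  P' = F/(m - 2r) - P/r, and with the integrating factor E = r^m exp(-2r), which vanishes at 0,
  (P E)' = E F/(m - 2r). Hence P > 0 as long as F has stayed positive; at a first zero of F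
  this would give y F' = P > 0, which is impossible. So F > 0 and P > 0 on (0, m^2/4).

  Since (y^c F)' = y^(c-1) (P + (c - r) F), the function y^c F(y) is strictly increasing
  wherever r \<le> c. Taking y_i = (x_i/2)^2 and c = r(y_2) = (m - sqrt(m^2 - x_2^2))/2 gives
  J_m(x_1) < (x_1/x_2)^sqrt(m^2 - x_2^2) J_m(x_2) for 0 < x_1 < x_2 < m; with x_1 = \<gamma> m and
  x_2 = \<delta> m this is the theorem with C = 1.
\<close>

definition bessel_coeff :: "real \<Rightarrow> nat \<Rightarrow> real" where
  "bessel_coeff m n = (-1)^n / (fact n * Gamma (m + real n + 1))"

definition bessel_series :: "real \<Rightarrow> real \<Rightarrow> real" where
  "bessel_series m y = (\<Sum>n. bessel_coeff m n * y ^ n)"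

definition bessel_series_deriv :: "real \<Rightarrow> real \<Rightarrow> real" where
  "bessel_series_deriv m y = (\<Sum>n. diffs (bessel_coeff m) n * y ^ n)"

lemma Gamma_le_Gamma_plus_nat:
  fixes m :: real
  assumes "m \<ge> 0"
  shows "Gamma (m + 1) \<le> Gamma (m + real n + 1)"
proof (induction n)
  case (Suc n)
  have "Gamma (m + real (Suc n) + 1) = (m + real n + 1) * Gamma (m + real n + 1)"
    using Gamma_plus1[of "m + real n + 1"] assms by (simp add: add_ac nonpos_Ints_def)
  moreover have "1 * Gamma (m + real n + 1) \<le> (m + real n + 1) * Gamma (m + real n + 1)"
    using assms by (intro mult_right_mono) (auto intro: less_imp_le)
  ultimately show ?case using Suc by linarith
qed simp

lemma bessel_coeff_Suc:
  assumes "m > -1"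
  shows "real (Suc n) * (real (Suc n) + m) * bessel_coeff m (Suc n) = - bessel_coeff m n"
proof -
  have "Gamma (m + real (Suc n) + 1) = (m + real n + 1) * Gamma (m + real n + 1)"
    using Gamma_plus1[of "m + real n + 1"] assms by (simp add: add_ac nonpos_Ints_def)
  moreover have "Gamma (m + real n + 1) > 0"
    using assms by simp
  ultimately show ?thesis
    using assms by (simp add: bessel_coeff_def divide_simps)
qed

lemma summable_bessel_coeff:
  assumes "m \<ge> 0"
  shows "summable (\<lambda>n. bessel_coeff m n * y ^ n)"
proof -
  have "norm (bessel_coeff m n * y ^ n) \<le> inverse (fact n) * \<bar>y\<bar> ^ n / Gamma (m + 1)" for n
  proof -
    have pos: "0 < Gamma (m + 1)" "0 < Gamma (m + real n + 1)"
      using assms by simp_all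
    then have "norm (bessel_coeff m n * y ^ n) = \<bar>y\<bar> ^ n / (fact n * Gamma (m + real n + 1))"
      by (simp add: bessel_coeff_def abs_mult power_abs)
    also have "\<dots> \<le> \<bar>y\<bar> ^ n / (fact n * Gamma (m + 1))"
      using pos Gamma_le_Gamma_plus_nat[OF assms]
      by (intro divide_left_mono mult_left_mono mult_pos_pos) auto
    finally show ?thesis
      by (simp add: field_simps)
  qed
  then show ?thesis
    by (intro summable_comparison_test[OF _ summable_divide[OF summable_exp]]) blast
qed

lemma bessel_series_0: "bessel_series m 0 = 1 / Gamma (m + 1)"
  unfolding bessel_series_def powser_zero by (simp add: bessel_coeff_def)

lemma bessel_series_has_derivative:
  assumes "m \<ge> 0"
  shows "(bessel_series m has_real_derivative bessel_series_deriv m y) (at y)"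
  unfolding bessel_series_def[abs_def] bessel_series_deriv_def
  using termdiffs_strong_converges_everywhere summable_bessel_coeff[OF assms] by blast

lemma continuous_on_bessel_series:
  assumes "m \<ge> 0"
  shows "continuous_on S (bessel_series m)"
  using DERIV_isCont[OF bessel_series_has_derivative[OF assms]]
  by (intro continuous_at_imp_continuous_on) auto

lemma bessel_series_ode:
  assumes "m \<ge> 0"
  shows "((\<lambda>y. y * bessel_series_deriv m y) has_real_derivative
           - m * bessel_series_deriv m y - bessel_series m y) (at y)"
proof -
  define w where "w n = real n * bessel_coeff m n" for n
  have summable_deriv: "summable (\<lambda>n. diffs (bessel_coeff m) n * z ^ n)" for z
    using termdiff_converges_all summable_bessel_coeff[OF assms] by blast
  have w_sums: "(\<lambda>n. w n * z ^ n) sums (z * bessel_series_deriv m z)" for z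
  proof -
    have "(\<lambda>n. z * (diffs (bessel_coeff m) n * z ^ n)) sums (z * bessel_series_deriv m z)"
      unfolding bessel_series_deriv_def using summable_deriv by (intro sums_mult summable_sums)
    then have "(\<lambda>n. w (Suc n) * z ^ Suc n) sums (z * bessel_series_deriv m z)"
      by (simp add: w_def diffs_def mult_ac)
    then show ?thesis
      using sums_Suc_iff[of "\<lambda>n. w n * z ^ n"] by (simp add: w_def)
  qed
  have diffs_w: "diffs w n = - m * diffs (bessel_coeff m) n - bessel_coeff m n" for n
    using bessel_coeff_Suc[of m n] assms by (simp add: w_def diffs_def algebra_simps)
  have "(\<Sum>n. diffs w n * y ^ n)
      = (\<Sum>n. - m * (diffs (bessel_coeff m) n * y ^ n) - bessel_coeff m n * y ^ n)"
    unfolding diffs_w by (simp add: algebra_simps)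
  also have "\<dots> = (\<Sum>n. - m * (diffs (bessel_coeff m) n * y ^ n)) - bessel_series m y"
    unfolding bessel_series_def
    using summable_mult[OF summable_deriv, of "- m"] summable_bessel_coeff[OF assms]
    by (intro suminf_diff[symmetric]) simp_all
  also have "\<dots> = - m * bessel_series_deriv m y - bessel_series m y"
    unfolding bessel_series_deriv_def using suminf_mult[OF summable_deriv, of "- m"] by simp
  finally have "(\<Sum>n. diffs w n * y ^ n) = - m * bessel_series_deriv m y - bessel_series m y" .
  moreover have "((\<lambda>z. \<Sum>n. w n * z ^ n) has_real_derivative (\<Sum>n. diffs w n * y ^ n)) (at y)"
    using w_sums by (intro termdiffs_strong_converges_everywhere) (auto dest: sums_summable)
  moreover have "(\<lambda>z. \<Sum>n. w n * z ^ n) = (\<lambda>z. z * bessel_series_deriv m z)"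
    using sums_unique[OF w_sums] by simp
  ultimately show ?thesis
    by simp
qed

lemma besselJ_eq_bessel_series:
  assumes "m \<ge> 0" and "x > 0"
  shows "besselJ m x = (x / 2) powr m * bessel_series m ((x / 2)\<^sup>2)"
proof -
  have "(-1)^k / (fact k * Gamma (m + real k + 1)) * (x / 2) powr (2 * real k + m)
      = (x / 2) powr m * (bessel_coeff m k * ((x / 2)\<^sup>2) ^ k)" for k
  proof -
    have "(x / 2) powr (2 * real k + m) = (x / 2) powr m * (x / 2) powr real (2 * k)"
      by (simp add: powr_add mult_ac)
    also have "(x / 2) powr real (2 * k) = ((x / 2)\<^sup>2) ^ k"
      using assms by (subst powr_realpow) (simp_all add: power_mult)
    finally show ?thesis
      by (simp add: bessel_coeff_def mult_ac)
  qed
  then show ?thesis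
    unfolding besselJ_def bessel_series_def
    using summable_bessel_coeff[OF assms(1)] by (simp add: suminf_mult)
qed

lemma besselJ_eq_scaled_bessel_series:
  assumes "m \<ge> 0" and "x > 0"
  shows "besselJ m x
    = (x / 2) powr (m - 2 * c) * (((x / 2)\<^sup>2) powr c * bessel_series m ((x / 2)\<^sup>2))"
proof -
  have "((x / 2)\<^sup>2) powr c = (x / 2) powr (2 * c)"
    using assms(2) by (simp add: powr_def ln_realpow)
  then show ?thesis
    using besselJ_eq_bessel_series[OF assms] by (simp add: powr_add[symmetric])
qed

definition lower_root :: "real \<Rightarrow> real \<Rightarrow> real" where
  "lower_root m y = (m - sqrt (m\<^sup>2 - 4 * y)) / 2"

lemma lower_root_quadratic:
  assumes "y \<le> m\<^sup>2 / 4"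
  shows "(lower_root m y)\<^sup>2 - m * lower_root m y + y = 0"
proof -
  define s where "s = sqrt (m\<^sup>2 - 4 * y)"
  have "s\<^sup>2 = m\<^sup>2 - 4 * y"
    using assms by (simp add: s_def)
  then show ?thesis
    unfolding lower_root_def s_def[symmetric] by (simp add: field_simps) algebra
qed

lemma lower_root_mono:
  assumes "y1 \<le> y2"
  shows "lower_root m y1 \<le> lower_root m y2"
  using assms by (simp add: lower_root_def)

lemma lower_root_0:
  assumes "m \<ge> 0"
  shows "lower_root m 0 = 0"
  using assms by (simp add: lower_root_def)

lemma lower_root_nonneg:
  assumes "m \<ge> 0" and "y \<ge> 0"
  shows "lower_root m y \<ge> 0"
  using lower_root_mono[OF assms(2), of m] lower_root_0[OF assms(1)] by simp

lemma lower_root_pos: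
  assumes "m \<ge> 0" and "y > 0"
  shows "lower_root m y > 0"
proof -
  have "sqrt (m\<^sup>2 - 4 * y) < sqrt (m\<^sup>2)"
    using assms(2) by (intro real_sqrt_less_mono) simp
  then show ?thesis
    using assms(1) by (simp add: lower_root_def)
qed

lemma lower_root_less_half:
  assumes "y < m\<^sup>2 / 4"
  shows "lower_root m y < m / 2"
  using assms by (simp add: lower_root_def)

lemma lower_root_has_derivative:
  assumes "y < m\<^sup>2 / 4"
  shows "(lower_root m has_real_derivative 1 / (m - 2 * lower_root m y)) (at y)"
proof -
  have "((\<lambda>y. (m - sqrt (m\<^sup>2 - 4 * y)) / 2) has_real_derivative
          - (inverse (sqrt (m\<^sup>2 - 4 * y)) / 2 * (- 4)) / 2) (at y)"
    using assms by (auto intro!: derivative_eq_intros)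
  then show ?thesis
    by (simp add: lower_root_def[abs_def] field_simps)
qed

definition bessel_growth :: "real \<Rightarrow> real \<Rightarrow> real" where
  "bessel_growth m y = lower_root m y * bessel_series m y + y * bessel_series_deriv m y"

lemma bessel_growth_has_derivative:
  assumes "m \<ge> 0" and "0 < y" and "y < m\<^sup>2 / 4"
  shows "(bessel_growth m has_real_derivative
           bessel_series m y / (m - 2 * lower_root m y) - bessel_growth m y / lower_root m y) (at y)"
proof -
  define r where "r = lower_root m y"
  have r: "0 < r" "r < m / 2" "r\<^sup>2 - m * r + y = 0"
    using lower_root_pos lower_root_less_half lower_root_quadratic assms by (simp_all add: r_def)
  have "(bessel_growth m has_real_derivative
          1 / (m - 2 * r) * bessel_series m y + bessel_series_deriv m y * r
          + (- m * bessel_series_deriv m y - bessel_series m y)) (at y)"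
    unfolding bessel_growth_def[abs_def] r_def
    by (intro DERIV_add DERIV_mult lower_root_has_derivative bessel_series_has_derivative
        bessel_series_ode assms)
  moreover have "1 / (m - 2 * r) * bessel_series m y + bessel_series_deriv m y * r
          + (- m * bessel_series_deriv m y - bessel_series m y)
        = bessel_series m y / (m - 2 * r) - bessel_growth m y / r"
    \<comment> \<open>the terms in F' cancel because r (r - m) = -y\<close>
    using r unfolding bessel_growth_def r_def[symmetric]
    by (simp add: field_simps power2_eq_square) algebra
  ultimately show ?thesis
    unfolding r_def by metis
qed

lemma continuous_on_bessel_growth:
  assumes "m \<ge> 0"
  shows "continuous_on S (bessel_growth m)"
proof -
  have "continuous_on S (lower_root m)"
    unfolding lower_root_def[abs_def] by (intro continuous_intros) auto
  moreover have "continuous_on S (\<lambda>y. y * bessel_series_deriv m y)"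
    using DERIV_isCont[OF bessel_series_ode[OF assms]]
    by (intro continuous_at_imp_continuous_on) auto
  ultimately show ?thesis
    unfolding bessel_growth_def[abs_def]
    using continuous_on_bessel_series[OF assms]
    by (intro continuous_on_add continuous_on_mult[of S "lower_root m"])
qed

definition integrating_factor :: "real \<Rightarrow> real \<Rightarrow> real" where
  "integrating_factor m y = lower_root m y powr m * exp (- 2 * lower_root m y)"

context
  fixes m :: real
  assumes m_pos: "m > 0"
begin

lemma integrating_factor_0: "integrating_factor m 0 = 0"
  using m_pos by (simp add: integrating_factor_def lower_root_0)

lemma integrating_factor_pos:
  assumes "y > 0"
  shows "integrating_factor m y > 0"
  using lower_root_pos[of m y] m_pos assms by (simp add: integrating_factor_def)

lemma integrating_factor_has_derivative:
  assumes "0 < y" and "y < m\<^sup>2 / 4"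
  shows "(integrating_factor m has_real_derivative integrating_factor m y / lower_root m y) (at y)"
proof -
  define r where "r = lower_root m y"
  have r: "0 < r" "r < m / 2"
    using lower_root_pos lower_root_less_half m_pos assms by (simp_all add: r_def less_imp_le)
  have "(integrating_factor m has_real_derivative
          m * r powr (m - 1) * (1 / (m - 2 * r)) * exp (- 2 * r)
          + r powr m * (exp (- 2 * r) * (- 2 * (1 / (m - 2 * r))))) (at y)"
    unfolding integrating_factor_def[abs_def] r_def
    using r lower_root_has_derivative[OF assms(2)]
    by (auto intro!: derivative_eq_intros simp: r_def)
  moreover have "m * r powr (m - 1) * (1 / (m - 2 * r)) * exp (- 2 * r)
          + r powr m * (exp (- 2 * r) * (- 2 * (1 / (m - 2 * r))))
        = integrating_factor m y / r"
  proof -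
    have powr_pred: "r powr (m - 1) = r powr m / r"
      using r by (simp add: powr_diff)
    have "m - 2 * r \<noteq> 0" "r \<noteq> 0"
      using r by auto
    then show ?thesis
      unfolding powr_pred integrating_factor_def r_def[symmetric]
      by (simp add: divide_simps) (simp add: algebra_simps)
  qed
  ultimately show ?thesis
    unfolding r_def by metis
qed

lemma continuous_on_integrating_factor: "continuous_on {0..} (integrating_factor m)"
  unfolding integrating_factor_def[abs_def] lower_root_def
  using m_pos lower_root_nonneg[of m]
  by (intro continuous_intros continuous_on_powr') (auto simp: lower_root_def)

lemma bessel_growth_pos_of_bessel_series_pos:
  assumes "0 < t" and "t < m\<^sup>2 / 4"
    and series_pos: "\<And>u. 0 < u \<Longrightarrow> u < t \<Longrightarrow> bessel_series m u > 0"
  shows "bessel_growth m t > 0"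
proof -
  define Q where "Q y = bessel_growth m y * integrating_factor m y" for y
  have "Q 0 < Q t"
  proof (rule DERIV_pos_imp_increasing_open[OF assms(1)])
    fix y
    assume y: "0 < y" "y < t"
    then have "y < m\<^sup>2 / 4"
      using assms(2) by linarith
    then have "(Q has_real_derivative
        (bessel_series m y / (m - 2 * lower_root m y) - bessel_growth m y / lower_root m y)
          * integrating_factor m y
        + integrating_factor m y / lower_root m y * bessel_growth m y) (at y)"
      unfolding Q_def[abs_def] using m_pos y
      by (intro DERIV_mult bessel_growth_has_derivative integrating_factor_has_derivative) auto
    moreover have "bessel_series m y / (m - 2 * lower_root m y) * integrating_factor m y > 0"
      using series_pos[OF y] lower_root_less_half[OF \<open>y < m\<^sup>2 / 4\<close>]
        integrating_factor_pos[OF y(1)]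
      by simp
    ultimately show "\<exists>d. (Q has_real_derivative d) (at y) \<and> d > 0"
      by (intro exI conjI) (auto simp: field_simps)
  next
    show "continuous_on {0..t} Q"
      unfolding Q_def[abs_def] using m_pos
      by (intro continuous_intros continuous_on_bessel_growth
          continuous_on_subset[OF continuous_on_integrating_factor]) auto
  qed
  then show ?thesis
    using integrating_factor_0 integrating_factor_pos[OF assms(1)]
    by (simp add: Q_def zero_less_mult_iff)
qed

lemma bessel_series_pos:
  assumes "0 \<le> y" and "y < m\<^sup>2 / 4"
  shows "bessel_series m y > 0"
proof (rule ccontr)
  assume "\<not> bessel_series m y > 0"
  define Z where "Z = {0..y} \<inter> {t. bessel_series m t \<le> 0}"
  have "compact Z"
    unfolding Z_def using m_pos
    by (intro compact_Int_closed closed_Collect_le continuous_on_bessel_series) auto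
  moreover have "Z \<noteq> {}"
    using \<open>\<not> bessel_series m y > 0\<close> assms unfolding Z_def by auto
  ultimately obtain t where t: "t \<in> Z" and t_least: "\<forall>u\<in>Z. t \<le> u"
    by (meson compact_attains_inf)
  have t_range: "0 \<le> t" "t < m\<^sup>2 / 4" and t_nonpos: "bessel_series m t \<le> 0"
    using t assms unfolding Z_def by auto
  have "bessel_series m 0 > 0"
    using m_pos by (simp add: bessel_series_0)
  then have "t > 0"
    using t_range(1) t_nonpos by (cases "t = 0") auto
  have before_t: "bessel_series m u > 0" if "0 < u" "u < t" for u
  proof (rule ccontr)
    assume "\<not> bessel_series m u > 0"
    then have "u \<in> Z"
      using that t Z_def by auto
    then show False
      using t_least that by auto
  qed
  have "bessel_growth m t > 0"
    using bessel_growth_pos_of_bessel_series_pos \<open>t > 0\<close> t_range before_t by blast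
  moreover have "lower_root m t * bessel_series m t \<le> 0"
    using lower_root_nonneg[of m t] m_pos t_range t_nonpos by (simp add: mult_nonneg_nonpos)
  ultimately have "t * bessel_series_deriv m t > 0"
    unfolding bessel_growth_def by linarith
  then have "bessel_series_deriv m t > 0"
    using \<open>t > 0\<close> by (simp add: zero_less_mult_iff)
  then obtain d where "d > 0"
    and d: "\<And>h. 0 < h \<Longrightarrow> h < d \<Longrightarrow> bessel_series m (t - h) < bessel_series m t"
    using DERIV_pos_inc_left[OF bessel_series_has_derivative] m_pos by (meson less_imp_le)
  define h where "h = min d t / 2"
  have "0 < h" "h < d" "h < t"
    using \<open>d > 0\<close> \<open>t > 0\<close> by (auto simp: h_def)
  then show False
    using d[of h] before_t[of "t - h"] t_nonpos by linarith
qed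

lemma bessel_growth_pos:
  assumes "0 < y" and "y < m\<^sup>2 / 4"
  shows "bessel_growth m y > 0"
  using assms by (intro bessel_growth_pos_of_bessel_series_pos bessel_series_pos) auto

lemma bessel_series_scaled_strict_mono:
  assumes "0 < y1" and "y1 < y2" and "y2 < m\<^sup>2 / 4" and "lower_root m y2 \<le> c"
  shows "y1 powr c * bessel_series m y1 < y2 powr c * bessel_series m y2"
proof (rule DERIV_pos_imp_increasing[OF assms(2)])
  fix y
  assume y: "y1 \<le> y" "y \<le> y2"
  then have "0 < y" "y < m\<^sup>2 / 4"
    using assms by auto
  have "((\<lambda>y. y powr c * bessel_series m y) has_real_derivative
          c * y powr (c - 1) * bessel_series m y + bessel_series_deriv m y * y powr c) (at y)"
    using \<open>0 < y\<close> m_pos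
    by (intro DERIV_mult has_real_derivative_powr bessel_series_has_derivative) auto
  moreover have "c * y powr (c - 1) * bessel_series m y + bessel_series_deriv m y * y powr c
      = y powr (c - 1) * (bessel_growth m y + (c - lower_root m y) * bessel_series m y)"
    using \<open>0 < y\<close> by (simp add: bessel_growth_def powr_diff field_simps)
  moreover have "y powr (c - 1) > 0"
    using \<open>0 < y\<close> by simp
  moreover have "bessel_growth m y + (c - lower_root m y) * bessel_series m y > 0"
    using bessel_growth_pos[OF \<open>0 < y\<close> \<open>y < m\<^sup>2 / 4\<close>] bessel_series_pos[of y]
      lower_root_mono[OF y(2), of m] assms(4) \<open>0 < y\<close> \<open>y < m\<^sup>2 / 4\<close>
    by (simp add: add_pos_nonneg)
  ultimately show "\<exists>d. ((\<lambda>y. y powr c * bessel_series m y) has_real_derivative d) (at y) \<and> d > 0"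
    by (metis mult_pos_pos)
qed

end

lemma besselJ_less_powr_ratio:
  assumes "m > 0" and "0 < x1" and "x1 < x2" and "x2 < m"
  shows "besselJ m x1 < (x1 / x2) powr sqrt (m\<^sup>2 - x2\<^sup>2) * besselJ m x2"
proof -
  define \<sigma> where "\<sigma> = sqrt (m\<^sup>2 - x2\<^sup>2)"
  define y1 where "y1 = (x1 / 2)\<^sup>2"
  define y2 where "y2 = (x2 / 2)\<^sup>2"
  define c where "c = lower_root m y2"
  have exponent: "m - 2 * c = \<sigma>"
    by (simp add: c_def lower_root_def y2_def \<sigma>_def power_divide) (simp add: field_simps)
  have "0 < y1" "y1 < y2" "y2 < m\<^sup>2 / 4"
    using assms by (simp_all add: y1_def y2_def power_strict_mono power_divide)
  have "besselJ m x1 = (x1 / 2) powr \<sigma> * (y1 powr c * bessel_series m y1)"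
    using besselJ_eq_scaled_bessel_series[of m x1 c] assms exponent by (simp add: y1_def)
  also have "\<dots> < (x1 / 2) powr \<sigma> * (y2 powr c * bessel_series m y2)"
    using bessel_series_scaled_strict_mono[OF assms(1) \<open>0 < y1\<close> \<open>y1 < y2\<close> \<open>y2 < m\<^sup>2 / 4\<close>]
      assms(2)
    by (simp add: c_def)
  also have "\<dots> = (x1 / x2) powr \<sigma> * besselJ m x2"
    using besselJ_eq_scaled_bessel_series[of m x2 c] assms exponent
    by (simp add: y2_def powr_divide)
  finally show ?thesis
    by (simp add: \<sigma>_def)
qed

theorem mainTheorem1:
  fixes \<gamma> \<delta> :: real
  assumes "0 < \<gamma>" and "\<gamma> < \<delta>" and "\<delta> < 1"
  shows "\<exists>C>0. \<forall>m::real. m > 0 \<longrightarrow>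
           besselJ m (\<gamma> * m) < C * (\<gamma> / \<delta>) powr (sqrt (1 - \<delta>\<^sup>2) * m) * besselJ m (\<delta> * m)"
proof (intro exI[of _ 1] conjI allI impI)
  fix m :: real
  assume "m > 0"
  have "m\<^sup>2 - (\<delta> * m)\<^sup>2 = (1 - \<delta>\<^sup>2) * m\<^sup>2"
    by (simp add: algebra_simps)
  then have "sqrt (1 - \<delta>\<^sup>2) * m = sqrt (m\<^sup>2 - (\<delta> * m)\<^sup>2)"
    using \<open>m > 0\<close> by (simp add: real_sqrt_mult)
  moreover have "\<gamma> * m / (\<delta> * m) = \<gamma> / \<delta>"
    using \<open>m > 0\<close> by simp
  ultimately show "besselJ m (\<gamma> * m) < 1 * (\<gamma> / \<delta>) powr (sqrt (1 - \<delta>\<^sup>2) * m) * besselJ m (\<delta> * m)"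
    using besselJ_less_powr_ratio[of m "\<gamma> * m" "\<delta> * m"] assms \<open>m > 0\<close> by simp
qed simp

end
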